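(* Let $(x_+,x_-,1)$ be an efficient solution of the QCQP (i.e. with robustness level $r=1$). Let $v=(1,x_+^T,x_-^T,1)^T\in\mathbb{R}^{2n+2}$. Then the rank-one matrix $Z=vv^T$ is feasible and efficient for the SDP relaxation.
   Context: Let $k,m,n\in\mathbb{N}$. Let $A_c,A_\delta\in\mathbb{R}^{m\times n}$ with $A_\delta\ge 0$ entrywise, $b_c,b_\delta\in\mathbb{R}^m$ with $b_\delta\ge0$, $G\in\mathbb{R}^{k\times n}$, and $\ell,u\in\mathbb{R}^n$ with $\ell\le u$. All vector inequalities are componentwise. QCQP: variables $x_+,x_-\in\mathbb{R}^n_{\ge0}$, $r\in[0,1]$, subject to $A_cx_+-A_cx_-+rA_\delta x_++rA_\delta x_-+rb_\delta-b_c\le0$ and $\ell\le x_+-x_-\le u$; vector objective $F(x_+,x_-,r)=(G(x_+-x_-),-r)\in\mathbb{R}^{k+1}$, minimized in the Pareto sense. SDP relaxation: variable a symmetric positive semidefinite matrix $Z$ of size $(2n+2)\times(2n+2)$ written in block form with row/column blocks of sizes $1,n,n,1$: $Z=\begin{pmatrix} Z_{00} & z_+^T & z_-^T & \rho\\ z_+ & * & * & w_+\\ z_- & * & * & w_-\\ \rho & w_+^T & w_-^T & \sigma\end{pmatrix}$, with $z_\pm,w_\pm\in\mathbb{R}^n$, $\rho,\sigma\in\mathbb{R}$. Constraints: $Z_{00}=1$; $A_cz_+-A_cz_-+A_\delta(w_++w_-)+\rho\, b_\delta-b_c\le0$; $\ell\le z_+-z_-\le u$; $z_+,z_-\ge0$,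 $\rho\ge0$, $w_+,w_-\ge0$; $\sigma\le1$. Vector objective $(G(z_+-z_-),-\rho)\in\mathbb{R}^{k+1}$, minimized in the Pareto sense. Efficiency (for minimizing a vector function $f$ over a feasible set $\mathcal{X}$): $x^*\in\mathcal{X}$ is efficient if there is no $x\in\mathcal{X}$ with $f(x)\le f(x^* )$ and $f(x)\ne f(x^* )$. *)

theory Defs
  imports "HOL-Analysis.Analysis"
begin

text \<open>Index type for the (2n+2)x(2n+2) SDP matrix, with row/column blocks of sizes 1, n, n, 1:
  I0 is the first index, IP j the j-th index of the x_+ block, IM j the j-th index of
  the x_- block, IS the last index.\<close>
datatype 'n sdpidx = I0 | IP 'n | IM 'n | IS

lemma UNIV_sdpidx: "(UNIV :: 'n sdpidx set) = {I0, IS} \<union> range IP \<union> range IM"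
proof -
  have "x \<in> {I0, IS} \<union> range IP \<union> range IM" for x :: "'n sdpidx"
    by (cases x) auto
  then show ?thesis by blast
qed

instance sdpidx :: (finite) finite
  by standard (simp add: UNIV_sdpidx)

definition vle :: "real ^ 'a \<Rightarrow> real ^ 'a \<Rightarrow> bool" where
  "vle x y \<longleftrightarrow> (\<forall>i. x $ i \<le> y $ i)"

text \<open>Componentwise order on the objective space R^(k+1), represented as R^k x R.\<close>
definition objle :: "(real ^ 'k) \<times> real \<Rightarrow> (real ^ 'k) \<times> real \<Rightarrow> bool" where
  "objle a b \<longleftrightarrow> vle (fst a) (fst b) \<and> snd a \<le> snd b"

definition efficient :: "('x \<Rightarrow> (real ^ 'k) \<times> real) \<Rightarrow> 'x set \<Rightarrow> 'x \<Rightarrow> bool" where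
  "efficient f X xs \<longleftrightarrow> xs \<in> X \<and> \<not> (\<exists>x\<in>X. objle (f x) (f xs) \<and> f x \<noteq> f xs)"

definition psd :: "real ^ 'i ^ 'i \<Rightarrow> bool" where
  "psd Z \<longleftrightarrow> transpose Z = Z \<and> (\<forall>x. 0 \<le> x \<bullet> (Z *v x))"

definition qcqp_feasible ::
  "real ^ 'n ^ 'm \<Rightarrow> real ^ 'n ^ 'm \<Rightarrow> real ^ 'm \<Rightarrow> real ^ 'm \<Rightarrow> real ^ 'n \<Rightarrow> real ^ 'n
   \<Rightarrow> ((real ^ 'n) \<times> (real ^ 'n) \<times> real) set" where
  "qcqp_feasible Ac Ad bc bd l u = {(xp, xm, r).
      vle 0 xp \<and> vle 0 xm \<and> 0 \<le> r \<and> r \<le> 1 \<and>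
      vle (Ac *v xp - Ac *v xm + r *\<^sub>R (Ad *v xp) + r *\<^sub>R (Ad *v xm) + r *\<^sub>R bd - bc) 0 \<and>
      vle l (xp - xm) \<and> vle (xp - xm) u}"

definition qcqp_obj :: "real ^ 'n ^ 'k \<Rightarrow> (real ^ 'n) \<times> (real ^ 'n) \<times> real \<Rightarrow> (real ^ 'k) \<times> real" where
  "qcqp_obj G = (\<lambda>(xp, xm, r). (G *v (xp - xm), - r))"

definition zP :: "real ^ ('n::finite) sdpidx ^ 'n sdpidx \<Rightarrow> real ^ 'n" where
  "zP Z = (\<chi> j. Z $ IP j $ I0)"
definition zM :: "real ^ ('n::finite) sdpidx ^ 'n sdpidx \<Rightarrow> real ^ 'n" where
  "zM Z = (\<chi> j. Z $ IM j $ I0)"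
definition wP :: "real ^ ('n::finite) sdpidx ^ 'n sdpidx \<Rightarrow> real ^ 'n" where
  "wP Z = (\<chi> j. Z $ IP j $ IS)"
definition wM :: "real ^ ('n::finite) sdpidx ^ 'n sdpidx \<Rightarrow> real ^ 'n" where
  "wM Z = (\<chi> j. Z $ IM j $ IS)"
definition rho :: "real ^ ('n::finite) sdpidx ^ 'n sdpidx \<Rightarrow> real" where
  "rho Z = Z $ IS $ I0"
definition sigma :: "real ^ ('n::finite) sdpidx ^ 'n sdpidx \<Rightarrow> real" where
  "sigma Z = Z $ IS $ IS"

definition sdp_feasible ::
  "real ^ 'n ^ 'm \<Rightarrow> real ^ 'n ^ 'm \<Rightarrow> real ^ 'm \<Rightarrow> real ^ 'm \<Rightarrow> real ^ 'n \<Rightarrow> real ^ 'n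
   \<Rightarrow> (real ^ ('n::finite) sdpidx ^ 'n sdpidx) set" where
  "sdp_feasible Ac Ad bc bd l u = {Z.
      psd Z \<and> Z $ I0 $ I0 = 1 \<and>
      vle (Ac *v zP Z - Ac *v zM Z + Ad *v (wP Z + wM Z) + rho Z *\<^sub>R bd - bc) 0 \<and>
      vle l (zP Z - zM Z) \<and> vle (zP Z - zM Z) u \<and>
      vle 0 (zP Z) \<and> vle 0 (zM Z) \<and> 0 \<le> rho Z \<and> vle 0 (wP Z) \<and> vle 0 (wM Z) \<and>
      sigma Z \<le> 1}"

definition sdp_obj :: "real ^ 'n ^ 'k \<Rightarrow> real ^ ('n::finite) sdpidx ^ 'n sdpidx \<Rightarrow> (real ^ 'k) \<times> real" where
  "sdp_obj G Z = (G *v (zP Z - zM Z), - rho Z)"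

definition liftvec :: "real ^ 'n \<Rightarrow> real ^ 'n \<Rightarrow> real ^ ('n::finite) sdpidx" where
  "liftvec xp xm = (\<chi> i. case i of I0 \<Rightarrow> 1 | IP j \<Rightarrow> xp $ j | IM j \<Rightarrow> xm $ j | IS \<Rightarrow> 1)"

definition outer :: "real ^ 'i \<Rightarrow> real ^ 'i ^ 'i" where
  "outer v = (\<chi> i j. v $ i * v $ j)"

end

theory Submission
  imports Defs
begin

text \<open>Lifting (x_+, x_-, 1) gives a feasible rank-one matrix with the same objective value. For
  efficiency, let Z be feasible for the relaxation and dominate it; then rho Z \<ge> 1. The quadratic
  form of Z at d = e_0 - e_S equals 1 + sigma Z - 2 rho Z \<ge> 0, and sigma Z \<le> 1 forces
  rho Z = sigma Z = 1, so d is an isotropic vector of the positive semidefinite Z, hence lies in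
  its kernel: columns 0 and S of Z coincide, i.e. w_\<plusminus> = z_\<plusminus>. Then (z_+, z_-, 1) is
  feasible for the QCQP with the objective value of Z, contradicting efficiency of (x_+, x_-, 1).\<close>

lemma quadratic_nonneg_imp_linear_coeff_eq_0:
  fixes a b :: real
  assumes nonneg: "\<And>t. 0 \<le> a * t\<^sup>2 + b * t"
  shows "b = 0"
proof (rule ccontr)
  assume "b \<noteq> 0"
  define c where "c = \<bar>a\<bar> + 1"
  have "c > 0" by (simp add: c_def add_nonneg_pos)
  have "a * (- b / c)\<^sup>2 + b * (- b / c) = b\<^sup>2 * (a - c) / c\<^sup>2"
    using \<open>c > 0\<close> by (simp add: field_simps power2_eq_square)
  also have "\<dots> < 0"
    using \<open>b \<noteq> 0\<close> \<open>c > 0\<close> by (intro divide_neg_pos mult_pos_neg) (auto simp: c_def)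
  finally show False using nonneg[of "- b / c"] by linarith
qed

lemma psd_entry_sym:
  assumes "psd Z"
  shows "Z $ i $ j = Z $ j $ i"
  using assms unfolding psd_def by (metis transpose_def vec_lambda_beta)

lemma psd_inner_commute:
  assumes "psd Z"
  shows "x \<bullet> (Z *v y) = y \<bullet> (Z *v x)"
proof -
  have "x v* Z = Z *v x"
    using assms vector_transpose_matrix[of x Z] unfolding psd_def by simp
  then show ?thesis
    by (metis dot_lmul_matrix inner_commute)
qed

lemma psd_quadratic_form_eq_0_imp:
  assumes psd: "psd Z" and zero: "x \<bullet> (Z *v x) = 0"
  shows "Z *v x = 0"
proof -
  define y where "y = Z *v x"
  have "0 \<le> (y \<bullet> (Z *v y)) * t\<^sup>2 + (2 * (y \<bullet> y)) * t" for t
  proof -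
    have "0 \<le> (x + t *\<^sub>R y) \<bullet> (Z *v (x + t *\<^sub>R y))"
      using psd unfolding psd_def by blast
    also have "\<dots> = x \<bullet> (Z *v x) + t * (x \<bullet> (Z *v y) + y \<bullet> (Z *v x)) + t\<^sup>2 * (y \<bullet> (Z *v y))"
      by (simp add: matrix_vector_right_distrib matrix_vector_mult_scaleR inner_add_left
          inner_add_right algebra_simps power2_eq_square)
    also have "\<dots> = (y \<bullet> (Z *v y)) * t\<^sup>2 + (2 * (y \<bullet> y)) * t"
      using zero psd_inner_commute[OF psd, of x y] by (simp add: y_def algebra_simps)
    finally show ?thesis .
  qed
  then have "2 * (y \<bullet> y) = 0"
    by (rule quadratic_nonneg_imp_linear_coeff_eq_0)
  then show ?thesis by (simp add: y_def)
qed

lemma psd_corner_columns_eq: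
  fixes Z :: "real ^ 'i ^ 'i"
  assumes psd: "psd Z" and "Z $ i $ i = 1" "Z $ j $ j \<le> 1" "1 \<le> Z $ j $ i"
  shows "Z $ j $ i = 1" "Z $ j $ j = 1" "Z $ k $ i = Z $ k $ j"
proof -
  define d :: "real ^ 'i" where "d = axis i 1 - axis j 1"
  have Zd: "(Z *v d) $ k = Z $ k $ i - Z $ k $ j" for k
    by (simp add: d_def matrix_vector_mult_diff_distrib matrix_vector_mult_basis column_def)
  have "d \<bullet> (Z *v d) = (Z *v d) $ i - (Z *v d) $ j"
    by (simp add: d_def inner_diff_left inner_axis')
  also have "\<dots> = 1 + Z $ j $ j - 2 * Z $ j $ i"
    using Zd assms(2) psd_entry_sym[OF psd, of i j] by simp
  finally have form: "d \<bullet> (Z *v d) = 1 + Z $ j $ j - 2 * Z $ j $ i" .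
  moreover have "0 \<le> d \<bullet> (Z *v d)"
    using psd unfolding psd_def by blast
  ultimately show "Z $ j $ i = 1" "Z $ j $ j = 1"
    using assms(3,4) by linarith+
  with form have "Z *v d = 0"
    by (simp add: psd_quadratic_form_eq_0_imp[OF psd])
  then show "Z $ k $ i = Z $ k $ j"
    using Zd[of k] by simp
qed

lemma efficient_transfer:
  assumes "efficient f X x" and "y \<in> Y" and "g y = f x"
    and "\<And>y'. y' \<in> Y \<Longrightarrow> objle (g y') (g y) \<Longrightarrow> \<exists>x'\<in>X. f x' = g y'"
  shows "efficient g Y y"
  using assms unfolding efficient_def by metis

lemma outer_mult_vec: "outer v *v x = (v \<bullet> x) *\<^sub>R v"
  by (simp add: vec_eq_iff outer_def matrix_vector_mult_def inner_vec_def sum_distrib_left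
      sum_distrib_right mult_ac)

lemma psd_outer: "psd (outer v)"
proof -
  have "transpose (outer v) = outer v"
    by (simp add: vec_eq_iff outer_def transpose_def mult.commute)
  moreover have "0 \<le> x \<bullet> (outer v *v x)" for x
    by (simp add: outer_mult_vec inner_commute)
  ultimately show ?thesis
    unfolding psd_def by blast
qed

lemma outer_liftvec_blocks:
  fixes xp xm :: "real ^ 'n::finite"
  shows "zP (outer (liftvec xp xm)) = xp" "zM (outer (liftvec xp xm)) = xm"
    "wP (outer (liftvec xp xm)) = xp" "wM (outer (liftvec xp xm)) = xm"
    "rho (outer (liftvec xp xm)) = 1" "sigma (outer (liftvec xp xm)) = 1"
    "outer (liftvec xp xm) $ I0 $ I0 = 1"
  by (simp_all add: vec_eq_iff zP_def zM_def wP_def wM_def rho_def sigma_def outer_def liftvec_def)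

lemma sdp_obj_eq_qcqp_obj: "sdp_obj G Z = qcqp_obj G (zP Z, zM Z, rho Z)"
  by (simp add: sdp_obj_def qcqp_obj_def)

lemma outer_liftvec_sdp_feasible:
  assumes "(xp, xm, 1) \<in> qcqp_feasible Ac Ad bc bd l u"
  shows "outer (liftvec xp xm) \<in> sdp_feasible Ac Ad bc bd l u"
  using assms unfolding sdp_feasible_def qcqp_feasible_def
  by (simp add: outer_liftvec_blocks psd_outer matrix_vector_right_distrib add.assoc)

lemma qcqp_feasible_of_sdp_feasible:
  assumes "Z \<in> sdp_feasible Ac Ad bc bd l u" and "rho Z = 1" "wP Z = zP Z" "wM Z = zM Z"
  shows "(zP Z, zM Z, rho Z) \<in> qcqp_feasible Ac Ad bc bd l u"
  using assms unfolding sdp_feasible_def qcqp_feasible_def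
  by (simp add: matrix_vector_right_distrib add.assoc)

lemma sdp_feasible_rho_ge_1D:
  assumes "Z \<in> sdp_feasible Ac Ad bc bd l u" and "1 \<le> rho Z"
  shows "rho Z = 1" "wP Z = zP Z" "wM Z = zM Z"
proof -
  have "psd Z" "Z $ I0 $ I0 = 1" "Z $ IS $ IS \<le> 1" "1 \<le> Z $ IS $ I0"
    using assms unfolding sdp_feasible_def sigma_def rho_def by auto
  note corner = psd_corner_columns_eq[OF this]
  show "rho Z = 1"
    using corner(1) by (simp add: rho_def)
  show "wP Z = zP Z" "wM Z = zM Z"
    using corner(3) by (simp_all add: vec_eq_iff wP_def zP_def wM_def zM_def)
qed

theorem mainTheorem5:
  fixes Ac Ad :: "real ^ 'n ^ 'm" and bc bd :: "real ^ 'm" and G :: "real ^ 'n ^ 'k"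
    and l u xp xm :: "real ^ 'n"
  assumes "\<forall>i j. 0 \<le> Ad $ i $ j"
    and "vle 0 bd"
    and "vle l u"
    and "efficient (qcqp_obj G) (qcqp_feasible Ac Ad bc bd l u) (xp, xm, 1)"
  shows "outer (liftvec xp xm) \<in> sdp_feasible Ac Ad bc bd l u
    \<and> efficient (sdp_obj G) (sdp_feasible Ac Ad bc bd l u) (outer (liftvec xp xm))"
proof -
  let ?Z\<^sub>0 = "outer (liftvec xp xm)"
  have feasible: "?Z\<^sub>0 \<in> sdp_feasible Ac Ad bc bd l u"
    using assms(4) by (simp add: efficient_def outer_liftvec_sdp_feasible)
  have obj: "sdp_obj G ?Z\<^sub>0 = qcqp_obj G (xp, xm, 1)"
    by (simp add: sdp_obj_eq_qcqp_obj outer_liftvec_blocks)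
  have dominated: "\<exists>x\<in>qcqp_feasible Ac Ad bc bd l u. qcqp_obj G x = sdp_obj G Z"
    if Z: "Z \<in> sdp_feasible Ac Ad bc bd l u" and dominates: "objle (sdp_obj G Z) (sdp_obj G ?Z\<^sub>0)"
    for Z
  proof -
    from dominates have "1 \<le> rho Z"
      by (simp add: objle_def sdp_obj_def outer_liftvec_blocks)
    note collapse = sdp_feasible_rho_ge_1D[OF Z this]
    show ?thesis
    proof
      show "(zP Z, zM Z, rho Z) \<in> qcqp_feasible Ac Ad bc bd l u"
        using qcqp_feasible_of_sdp_feasible[OF Z collapse] .
    qed (simp add: sdp_obj_eq_qcqp_obj)
  qed
  have "efficient (sdp_obj G) (sdp_feasible Ac Ad bc bd l u) ?Z\<^sub>0"
    using dominated by (rule efficient_transfer[where g = "sdp_obj G", OF assms(4) feasible obj])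
  with feasible show ?thesis ..
qed

end
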